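(* Let $K$ be a field and let $f\colon R\to S$ be a morphism of Zinbiel algebras over $K$. For $i=1,2$, the maps $d^i_f\colon C^i_{\mathrm{Zinb}}(f,f)\to C^{i+1}_{\mathrm{Zinb}}(f,f)$ defined below satisfy $d^{i+1}_f\circ d^i_f=0$.
   Context: A Zinbiel algebra (dual Leibniz algebra) over $K$ is a $K$-vector space $R$ with a $K$-bilinear product $(x,y)\mapsto x\cdot y$ satisfying $(x\cdot y)\cdot z = x\cdot(y\cdot z)+x\cdot(z\cdot y)$ for all $x,y,z\in R$. A morphism $f\colon R\to S$ is a $K$-linear map with $f(x\cdot y)=f(x)\cdot f(y)$. An $R$-bimodule is a $K$-vector space $A$ with bilinear maps $R\otimes A\to A$, $A\otimes R\to A$ such that the Zinbiel identity holds whenever exactly one of $x,y,z$ lies in $A$ and the others in $R$. $R$ is an $R$-bimodule via its product, $S$ is an $S$-bimodule via its product, and $S$ is an $R$-bimodule via $r\cdot s=f(r)\cdot s$, $s\cdot r=s\cdot f(r)$. For an $R$-bimodule $A$ and $1\le n\le 4$ put $C^n_{\mathrm{Zinb}}(R,A)=\mathrm{Hom}_K(R^{\otimes n},A)$, and define $d^i\colon C^i_{\mathrm{Zinb}}(R,A)\to C^{i+1}_{\mathrm{Zinb}}(R,A)$ for $i=1,2,3$ by $(d^1\varphi)(x,y)=x\cdot\varphi(y)-\varphi(x\cdot y)+\varphi(x)\cdot y$, $(d^2\varphi)(x,y,z)=x\cdot(\varphi(y,z)+\varphi(z,y))-\varphi(x\cdot y,z)+\varphi(x,y\cdot z+z\cdot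 y)-\varphi(x,y)\cdot z$, $(d^3\varphi)(x,y,z,w)=x\cdot\{\varphi(y,z,w)-\varphi(z,w,y)+\varphi(z,y,w)-\varphi(w,z,y)\}-\varphi(x\cdot y,z,w)+\varphi(x,y\cdot z+z\cdot y,w)-\varphi(x,y,z\cdot w+w\cdot z)+\varphi(x,y,z)\cdot w$. Set $C^0_{\mathrm{Zinb}}(R,S)=0$ and $d^0=0$. For $1\le n\le 4$ let $C^n_{\mathrm{Zinb}}(f,f)=C^n_{\mathrm{Zinb}}(R,R)\times C^n_{\mathrm{Zinb}}(S,S)\times C^{n-1}_{\mathrm{Zinb}}(R,S)$ and for $1\le i\le 3$ define $d^i_f(\xi;\pi;\varphi)=(d^i\xi;\,d^i\pi;\,f\xi-\pi f-d^{i-1}\varphi)$, where $(f\xi)(x_1,\dots,x_i)=f(\xi(x_1,\dots,x_i))$ and $(\pi f)(x_1,\dots,x_i)=\pi(f(x_1),\dots,f(x_i))$ for $x_j\in R$, and $d^{i-1}\varphi$ is computed in $C^*_{\mathrm{Zinb}}(R,S)$ with $S$ an $R$-bimodule via $f$. *)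

theory Defs
  imports Complex_Main
begin

text \<open>Hom_K(V^{\<otimes>n}, A) is identified with K-multilinear maps V^n \<rightarrow> A (curried).\<close>

definition bilin :: "('k::field \<Rightarrow> 'a::ab_group_add \<Rightarrow> 'a) \<Rightarrow> ('k \<Rightarrow> 'b::ab_group_add \<Rightarrow> 'b)
    \<Rightarrow> ('k \<Rightarrow> 'c::ab_group_add \<Rightarrow> 'c) \<Rightarrow> ('a \<Rightarrow> 'b \<Rightarrow> 'c) \<Rightarrow> bool" where
  "bilin s1 s2 s3 g \<longleftrightarrow> (\<forall>x. Vector_Spaces.linear s2 s3 (g x))
                          \<and> (\<forall>y. Vector_Spaces.linear s1 s3 (\<lambda>x. g x y))"

definition zinbiel_algebra :: "('k::field \<Rightarrow> 'r::ab_group_add \<Rightarrow> 'r) \<Rightarrow> ('r \<Rightarrow> 'r \<Rightarrow> 'r) \<Rightarrow> bool" where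
  "zinbiel_algebra sc m \<longleftrightarrow> vector_space sc \<and> bilin sc sc sc m
     \<and> (\<forall>x y z. m (m x y) z = m x (m y z) + m x (m z y))"

definition zinbiel_morphism :: "('k::field \<Rightarrow> 'r::ab_group_add \<Rightarrow> 'r) \<Rightarrow> ('r \<Rightarrow> 'r \<Rightarrow> 'r)
    \<Rightarrow> ('k \<Rightarrow> 's::ab_group_add \<Rightarrow> 's) \<Rightarrow> ('s \<Rightarrow> 's \<Rightarrow> 's) \<Rightarrow> ('r \<Rightarrow> 's) \<Rightarrow> bool" where
  "zinbiel_morphism scR mR scS mS f \<longleftrightarrow> Vector_Spaces.linear scR scS f
     \<and> (\<forall>x y. f (mR x y) = mS (f x) (f y))"

text \<open>Zinbiel coboundaries with coefficients in a bimodule A given by the product m on R,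
  left action l :: R \<Rightarrow> A \<Rightarrow> A and right action r :: A \<Rightarrow> R \<Rightarrow> A.\<close>

definition zd1 :: "('r \<Rightarrow> 'r \<Rightarrow> 'r) \<Rightarrow> ('r \<Rightarrow> 'a \<Rightarrow> 'a) \<Rightarrow> ('a \<Rightarrow> 'r \<Rightarrow> 'a)
    \<Rightarrow> ('r \<Rightarrow> 'a::ab_group_add) \<Rightarrow> ('r \<Rightarrow> 'r \<Rightarrow> 'a)" where
  "zd1 m l r \<phi> = (\<lambda>x y. l x (\<phi> y) - \<phi> (m x y) + r (\<phi> x) y)"

definition zd2 :: "('r::ab_group_add \<Rightarrow> 'r \<Rightarrow> 'r) \<Rightarrow> ('r \<Rightarrow> 'a \<Rightarrow> 'a) \<Rightarrow> ('a \<Rightarrow> 'r \<Rightarrow> 'a)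
    \<Rightarrow> ('r \<Rightarrow> 'r \<Rightarrow> 'a::ab_group_add) \<Rightarrow> ('r \<Rightarrow> 'r \<Rightarrow> 'r \<Rightarrow> 'a)" where
  "zd2 m l r \<phi> = (\<lambda>x y z. l x (\<phi> y z + \<phi> z y) - \<phi> (m x y) z
                     + \<phi> x (m y z + m z y) - r (\<phi> x y) z)"

definition zd3 :: "('r::ab_group_add \<Rightarrow> 'r \<Rightarrow> 'r) \<Rightarrow> ('r \<Rightarrow> 'a \<Rightarrow> 'a) \<Rightarrow> ('a \<Rightarrow> 'r \<Rightarrow> 'a)
    \<Rightarrow> ('r \<Rightarrow> 'r \<Rightarrow> 'r \<Rightarrow> 'a::ab_group_add) \<Rightarrow> ('r \<Rightarrow> 'r \<Rightarrow> 'r \<Rightarrow> 'r \<Rightarrow> 'a)" where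
  "zd3 m l r \<phi> = (\<lambda>x y z w. l x (\<phi> y z w - \<phi> z w y + \<phi> z y w - \<phi> w z y)
                     - \<phi> (m x y) z w + \<phi> x (m y z + m z y) w
                     - \<phi> x y (m z w + m w z) + r (\<phi> x y z) w)"

text \<open>Elements of
  C^n(f,f) = C^n(R,R) \<times> C^n(S,S) \<times> C^{n-1}(R,S); C^0(R,S) = 0 is represented by unit,
  and d^0 = 0. S is an R-bimodule via f.\<close>

definition zdf1 :: "('r \<Rightarrow> 'r \<Rightarrow> 'r) \<Rightarrow> ('s \<Rightarrow> 's \<Rightarrow> 's) \<Rightarrow> ('r \<Rightarrow> 's)
    \<Rightarrow> ('r \<Rightarrow> 'r::ab_group_add) \<times> ('s \<Rightarrow> 's::ab_group_add) \<times> unit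
    \<Rightarrow> ('r \<Rightarrow> 'r \<Rightarrow> 'r) \<times> ('s \<Rightarrow> 's \<Rightarrow> 's) \<times> ('r \<Rightarrow> 's)" where
  "zdf1 mR mS f c = (case c of (\<xi>, \<pi>, _) \<Rightarrow>
     (zd1 mR mR mR \<xi>, zd1 mS mS mS \<pi>, \<lambda>x. f (\<xi> x) - \<pi> (f x) - 0))"

definition zdf2 :: "('r \<Rightarrow> 'r \<Rightarrow> 'r) \<Rightarrow> ('s \<Rightarrow> 's \<Rightarrow> 's) \<Rightarrow> ('r \<Rightarrow> 's)
    \<Rightarrow> ('r \<Rightarrow> 'r \<Rightarrow> 'r::ab_group_add) \<times> ('s \<Rightarrow> 's \<Rightarrow> 's::ab_group_add) \<times> ('r \<Rightarrow> 's)
    \<Rightarrow> ('r \<Rightarrow> 'r \<Rightarrow> 'r \<Rightarrow> 'r) \<times> ('s \<Rightarrow> 's \<Rightarrow> 's \<Rightarrow> 's) \<times> ('r \<Rightarrow> 'r \<Rightarrow> 's)" where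
  "zdf2 mR mS f c = (case c of (\<xi>, \<pi>, \<phi>) \<Rightarrow>
     (zd2 mR mR mR \<xi>, zd2 mS mS mS \<pi>,
      \<lambda>x y. f (\<xi> x y) - \<pi> (f x) (f y)
             - zd1 mR (\<lambda>a s. mS (f a) s) (\<lambda>s a. mS s (f a)) \<phi> x y))"

definition zdf3 :: "('r \<Rightarrow> 'r \<Rightarrow> 'r) \<Rightarrow> ('s \<Rightarrow> 's \<Rightarrow> 's) \<Rightarrow> ('r \<Rightarrow> 's)
    \<Rightarrow> ('r \<Rightarrow> 'r \<Rightarrow> 'r \<Rightarrow> 'r::ab_group_add) \<times> ('s \<Rightarrow> 's \<Rightarrow> 's \<Rightarrow> 's::ab_group_add) \<times> ('r \<Rightarrow> 'r \<Rightarrow> 's)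
    \<Rightarrow> ('r \<Rightarrow> 'r \<Rightarrow> 'r \<Rightarrow> 'r \<Rightarrow> 'r) \<times> ('s \<Rightarrow> 's \<Rightarrow> 's \<Rightarrow> 's \<Rightarrow> 's) \<times> ('r \<Rightarrow> 'r \<Rightarrow> 'r \<Rightarrow> 's)" where
  "zdf3 mR mS f c = (case c of (\<xi>, \<pi>, \<phi>) \<Rightarrow>
     (zd3 mR mR mR \<xi>, zd3 mS mS mS \<pi>,
      \<lambda>x y z. f (\<xi> x y z) - \<pi> (f x) (f y) (f z)
             - zd2 mR (\<lambda>a s. mS (f a) s) (\<lambda>s a. mS s (f a)) \<phi> x y z))"

end

theory Submission
  imports Defs
begin

text \<open>The composite \<open>d\<^sub>f d\<^sub>f\<close> has three components. The third is the cone component: \<open>d\<close> is natural both in the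
  coefficients (pushing forward along \<open>f\<close>, which is a map of \<open>R\<close>-bimodules \<open>R \<rightarrow> S\<close>) and in the
  algebra (pulling the \<open>S\<close>-bimodule \<open>S\<close> back along \<open>f\<close>), so \<open>f \<xi> - \<pi> f\<close> commutes with \<open>d\<close>
  and what remains is \<open>d d \<phi>\<close> in \<open>C\<^sup>*(R, S)\<close>. Finally \<open>d d = 0\<close> for an arbitrary bimodule is a
  direct expansion that only uses biadditivity, the Zinbiel identity and the three bimodule
  identities.\<close>

definition biadditive :: "('a::ab_group_add \<Rightarrow> 'b::ab_group_add \<Rightarrow> 'c::ab_group_add) \<Rightarrow> bool" where
  "biadditive g \<longleftrightarrow> (\<forall>x. additive (g x)) \<and> (\<forall>y. additive (\<lambda>x. g x y))"

lemma biadditiveI: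
  assumes "\<And>x y z. g (x + y) z = g x z + g y z" and "\<And>x y z. g x (y + z) = g x y + g x z"
  shows "biadditive g"
  using assms by (simp add: biadditive_def additive_def)

lemma biadditive_simps:
  assumes "biadditive g"
  shows "g (a + a') b = g a b + g a' b" "g (a - a') b = g a b - g a' b"
    "g (- a) b = - g a b" "g 0 b = 0"
    and "g a (b + b') = g a b + g a b'" "g a (b - b') = g a b - g a b'"
    "g a (- b) = - g a b" "g a 0 = 0"
proof -
  have left: "additive (\<lambda>a. g a b)" and right: "additive (g a)"
    using assms by (simp_all add: biadditive_def)
  show "g (a + a') b = g a b + g a' b" "g (a - a') b = g a b - g a' b"
    "g (- a) b = - g a b" "g 0 b = 0"
    using additive.add[OF left] additive.diff[OF left] additive.minus[OF left] additive.zero[OF left]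
    by simp_all
  show "g a (b + b') = g a b + g a b'" "g a (b - b') = g a b - g a b'"
    "g a (- b) = - g a b" "g a 0 = 0"
    using additive.add[OF right] additive.diff[OF right] additive.minus[OF right]
      additive.zero[OF right]
    by simp_all
qed

lemmas additive_simps = additive.add additive.diff additive.minus additive.zero

lemma linear_imp_additive: "Vector_Spaces.linear s1 s2 g \<Longrightarrow> additive g"
  by (simp add: Vector_Spaces.linear_iff additive_def)

lemma bilin_imp_biadditive: "bilin s1 s2 s3 g \<Longrightarrow> biadditive g"
  unfolding bilin_def biadditive_def by (blast intro: linear_imp_additive)

locale zinbiel_ring =
  fixes m :: "'r::ab_group_add \<Rightarrow> 'r \<Rightarrow> 'r"
  assumes biadditive_mult: "biadditive m"
    and zinbiel: "m (m x y) z = m x (m y z) + m x (m z y)"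

lemma zinbiel_algebra_imp_zinbiel_ring: "zinbiel_algebra sc m \<Longrightarrow> zinbiel_ring m"
  unfolding zinbiel_algebra_def zinbiel_ring_def by (blast intro: bilin_imp_biadditive)

locale zinbiel_bimodule = zinbiel_ring m for m :: "'r::ab_group_add \<Rightarrow> 'r \<Rightarrow> 'r" +
  fixes l :: "'r \<Rightarrow> 'a::ab_group_add \<Rightarrow> 'a" and r :: "'a \<Rightarrow> 'r \<Rightarrow> 'a"
  assumes biadditive_left_action: "biadditive l"
    and biadditive_right_action: "biadditive r"
    and zinbiel_RRA: "l (m x y) a = l x (l y a) + l x (r a y)"
    and zinbiel_RAR: "r (l x a) z = l x (r a z) + l x (l z a)"
    and zinbiel_ARR: "r (r a y) z = r a (m y z) + r a (m z y)"
begin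

lemmas bimodule_simps = biadditive_simps[OF biadditive_mult]
  biadditive_simps[OF biadditive_left_action] biadditive_simps[OF biadditive_right_action]
  zinbiel zinbiel_RRA zinbiel_RAR zinbiel_ARR

lemma zd1_diff: "zd1 m l r (\<lambda>x. \<phi> x - \<psi> x) x y = zd1 m l r \<phi> x y - zd1 m l r \<psi> x y"
  by (simp add: zd1_def bimodule_simps algebra_simps)

lemma zd2_diff:
  "zd2 m l r (\<lambda>x y. \<phi> x y - \<psi> x y) x y z = zd2 m l r \<phi> x y z - zd2 m l r \<psi> x y z"
  by (simp add: zd2_def bimodule_simps algebra_simps)

theorem zd2_zd1:
  assumes "additive \<phi>"
  shows "zd2 m l r (zd1 m l r \<phi>) = (\<lambda>x y z. 0)"
  by (simp add: zd1_def zd2_def fun_eq_iff bimodule_simps additive_simps[OF assms] algebra_simps)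

theorem zd3_zd2:
  assumes "biadditive \<phi>"
  shows "zd3 m l r (zd2 m l r \<phi>) = (\<lambda>x y z w. 0)"
  by (simp add: zd2_def zd3_def fun_eq_iff bimodule_simps biadditive_simps[OF assms]
      algebra_simps)

end

lemma zinbiel_bimodule_regular: "zinbiel_ring m \<Longrightarrow> zinbiel_bimodule m m m"
  by (simp add: zinbiel_bimodule_def zinbiel_bimodule_axioms_def zinbiel_ring_def)

lemma zinbiel_bimodule_pullback:
  assumes "zinbiel_ring mR" and "zinbiel_bimodule mS l r"
    and "additive f" and "\<And>x y. f (mR x y) = mS (f x) (f y)"
  shows "zinbiel_bimodule mR (\<lambda>x. l (f x)) (\<lambda>a x. r a (f x))"
proof -
  interpret S: zinbiel_bimodule mS l r by fact
  show ?thesis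
    by (intro zinbiel_bimodule.intro zinbiel_bimodule_axioms.intro biadditiveI assms(1))
      (simp_all add: assms(4) S.bimodule_simps additive_simps[OF assms(3)])
qed

lemma zd1_pushforward:
  assumes "additive g" and "\<And>x a. g (l x a) = l' x (g a)" and "\<And>a x. g (r a x) = r' (g a) x"
  shows "g (zd1 m l r \<phi> x y) = zd1 m l' r' (\<lambda>x. g (\<phi> x)) x y"
  by (simp add: zd1_def assms additive_simps[OF assms(1)])

lemma zd2_pushforward:
  assumes "additive g" and "\<And>x a. g (l x a) = l' x (g a)" and "\<And>a x. g (r a x) = r' (g a) x"
  shows "g (zd2 m l r \<phi> x y z) = zd2 m l' r' (\<lambda>x y. g (\<phi> x y)) x y z"
  by (simp add: zd2_def assms additive_simps[OF assms(1)])

lemma zd1_pullback: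
  assumes "\<And>x y. f (mR x y) = mS (f x) (f y)"
  shows "zd1 mS l r \<pi> (f x) (f y) = zd1 mR (\<lambda>x. l (f x)) (\<lambda>a x. r a (f x)) (\<lambda>x. \<pi> (f x)) x y"
  by (simp add: zd1_def assms)

lemma zd2_pullback:
  assumes "additive f" and "\<And>x y. f (mR x y) = mS (f x) (f y)"
  shows "zd2 mS l r \<pi> (f x) (f y) (f z)
    = zd2 mR (\<lambda>x. l (f x)) (\<lambda>a x. r a (f x)) (\<lambda>x y. \<pi> (f x) (f y)) x y z"
  by (simp add: zd2_def assms additive_simps[OF assms(1)])

locale zinbiel_ring_hom = source: zinbiel_ring mR + target: zinbiel_ring mS
  for mR :: "'r::ab_group_add \<Rightarrow> 'r \<Rightarrow> 'r" and mS :: "'s::ab_group_add \<Rightarrow> 's \<Rightarrow> 's" +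
  fixes f :: "'r \<Rightarrow> 's"
  assumes additive_hom: "additive f"
    and hom_mult: "f (mR x y) = mS (f x) (f y)"
begin

sublocale source: zinbiel_bimodule mR mR mR
  by (rule zinbiel_bimodule_regular) unfold_locales

sublocale target: zinbiel_bimodule mS mS mS
  by (rule zinbiel_bimodule_regular) unfold_locales

sublocale pullback: zinbiel_bimodule mR "\<lambda>x. mS (f x)" "\<lambda>a x. mS a (f x)"
  using zinbiel_bimodule_pullback[OF source.zinbiel_ring_axioms
      zinbiel_bimodule_regular[OF target.zinbiel_ring_axioms] additive_hom] hom_mult
  by blast

lemma zdf2_zdf1:
  assumes "additive \<xi>" and "additive \<pi>"
  shows "zdf2 mR mS f (zdf1 mR mS f (\<xi>, \<pi>, u)) = ((\<lambda>x y z. 0), (\<lambda>x y z. 0), (\<lambda>x y. 0))"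
proof -
  have "f (zd1 mR mR mR \<xi> x y)
      = zd1 mR (\<lambda>x. mS (f x)) (\<lambda>a x. mS a (f x)) (\<lambda>x. f (\<xi> x)) x y" for x y
    by (rule zd1_pushforward[where g = f]) (simp_all add: additive_hom hom_mult)
  moreover have "zd1 mS mS mS \<pi> (f x) (f y)
      = zd1 mR (\<lambda>x. mS (f x)) (\<lambda>a x. mS a (f x)) (\<lambda>x. \<pi> (f x)) x y" for x y
    by (rule zd1_pullback[where f = f and mR = mR]) (rule hom_mult)
  ultimately show ?thesis
    by (simp add: zdf1_def zdf2_def source.zd2_zd1 target.zd2_zd1 pullback.zd1_diff assms)
qed

lemma zdf3_zdf2:
  assumes "biadditive \<xi>" and "biadditive \<pi>" and "additive \<phi>"
  shows "zdf3 mR mS f (zdf2 mR mS f (\<xi>, \<pi>, \<phi>))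
    = ((\<lambda>x y z w. 0), (\<lambda>x y z w. 0), (\<lambda>x y z. 0))"
proof -
  have "f (zd2 mR mR mR \<xi> x y z)
      = zd2 mR (\<lambda>x. mS (f x)) (\<lambda>a x. mS a (f x)) (\<lambda>x y. f (\<xi> x y)) x y z" for x y z
    by (rule zd2_pushforward[where g = f]) (simp_all add: additive_hom hom_mult)
  moreover have "zd2 mS mS mS \<pi> (f x) (f y) (f z)
      = zd2 mR (\<lambda>x. mS (f x)) (\<lambda>a x. mS a (f x)) (\<lambda>x y. \<pi> (f x) (f y)) x y z" for x y z
    by (rule zd2_pullback[where f = f and mR = mR]) (rule additive_hom, rule hom_mult)
  ultimately show ?thesis
    by (simp add: zdf2_def zdf3_def source.zd3_zd2 target.zd3_zd2 pullback.zd2_diff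
        pullback.zd2_zd1 assms)
qed

end

theorem lemma2p1:
  fixes scR :: "'k::field \<Rightarrow> 'r::ab_group_add \<Rightarrow> 'r"
    and scS :: "'k \<Rightarrow> 's::ab_group_add \<Rightarrow> 's"
    and mR :: "'r \<Rightarrow> 'r \<Rightarrow> 'r" and mS :: "'s \<Rightarrow> 's \<Rightarrow> 's" and f :: "'r \<Rightarrow> 's"
  assumes R: "zinbiel_algebra scR mR"
    and S: "zinbiel_algebra scS mS"
    and hf: "zinbiel_morphism scR mR scS mS f"
  shows "(\<forall>\<xi> \<pi> u. Vector_Spaces.linear scR scR \<xi> \<and> Vector_Spaces.linear scS scS \<pi> \<longrightarrow>
            zdf2 mR mS f (zdf1 mR mS f (\<xi>, \<pi>, u))
              = ((\<lambda>x y z. 0), (\<lambda>x y z. 0), (\<lambda>x y. 0)))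
       \<and> (\<forall>\<xi> \<pi> \<phi>. bilin scR scR scR \<xi> \<and> bilin scS scS scS \<pi> \<and> Vector_Spaces.linear scR scS \<phi> \<longrightarrow>
            zdf3 mR mS f (zdf2 mR mS f (\<xi>, \<pi>, \<phi>))
              = ((\<lambda>x y z w. 0), (\<lambda>x y z w. 0), (\<lambda>x y z. 0)))"
proof -
  interpret zinbiel_ring_hom mR mS f
  proof (intro zinbiel_ring_hom.intro zinbiel_ring_hom_axioms.intro)
    show "zinbiel_ring mR" "zinbiel_ring mS"
      using R S by (simp_all add: zinbiel_algebra_imp_zinbiel_ring)
    show "additive f"
      using hf unfolding zinbiel_morphism_def by (blast intro: linear_imp_additive)
    show "f (mR x y) = mS (f x) (f y)" for x y
      using hf by (simp add: zinbiel_morphism_def)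
  qed
  show ?thesis
    by (blast intro: zdf2_zdf1 zdf3_zdf2 linear_imp_additive bilin_imp_biadditive)
qed

end
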